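(* Let $k\ge2$, let $f_1,\ldots,f_k$ be primitive forms of square-free levels with weights $\kappa_1,\ldots,\kappa_k$, and let $\nu_1,\ldots,\nu_k$ be distinct positive integers with $a_{f_i}(\nu_i)\neq0$ for all $i$. Put $K=\max\{\nu_1,\ldots,\nu_k\}$. Then there exists a real number $c_0>0$, depending on $K$ and $f_1,\ldots,f_k$, such that for every positive integer $m$ with $m\equiv0\pmod{(2K)!}$ and every $i=1,\ldots,k$, $$c_0|\lambda_{f_i}(m_i)|\le|\lambda_{f_i}(m+\nu_i)|\le c_0^{-1}|\lambda_{f_i}(m_i)|$$ and $$c_0|\lambda_{f_i}(m_i)|\le\frac{|a_{f_i}(m+\nu_i)|}{m^{(\kappa_i-1)/2}}\le c_0^{-1}|\lambda_{f_i}(m_i)|,$$ where $m_i$ is defined by $m+\nu_i=\nu_im_i$.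
   Context: A primitive form of weight $\kappa$ and level $N$ is a holomorphic cusp form of weight $\kappa$ for $\Gamma_0(N)$ with trivial character which is a normalized Hecke eigenform for all Hecke operators and all Atkin–Lehner involutions; $f(z)=\sum_{n\ge1}a_f(n)q^n$ is its Fourier expansion, and $\lambda_f(n)=a_f(n)/n^{(\kappa-1)/2}$. *)

theory Defs
  imports "HOL-Analysis.Analysis" "HOL-Computational_Algebra.Squarefree"
begin

definition upper_half :: "complex set" where
  "upper_half = {z. Im z > 0}"

definition gamma0_invariant :: "nat \<Rightarrow> nat \<Rightarrow> (complex \<Rightarrow> complex) \<Rightarrow> bool" where
  "gamma0_invariant \<kappa> N f \<longleftrightarrow>
     (\<forall>a b c d :: int. a * d - b * c = 1 \<and> int N dvd c \<longrightarrow>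
        (\<forall>z\<in>upper_half. f ((of_int a * z + of_int b) / (of_int c * z + of_int d))
                         = (of_int c * z + of_int d) ^ \<kappa> * f z))"

definition vanishes_at_cusps :: "nat \<Rightarrow> (complex \<Rightarrow> complex) \<Rightarrow> bool" where
  "vanishes_at_cusps \<kappa> f \<longleftrightarrow>
     (\<forall>a b c d :: int. a * d - b * c = 1 \<longrightarrow>
        (\<forall>\<epsilon>>0. \<exists>Y. \<forall>z. Im z > Y \<longrightarrow>
           norm (f ((of_int a * z + of_int b) / (of_int c * z + of_int d))
                 / (of_int c * z + of_int d) ^ \<kappa>) < \<epsilon>))"

definition cusp_form :: "nat \<Rightarrow> nat \<Rightarrow> (complex \<Rightarrow> complex) \<Rightarrow> bool" where
  "cusp_form \<kappa> N f \<longleftrightarrow> N > 0 \<and> f holomorphic_on upper_half \<and>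
     gamma0_invariant \<kappa> N f \<and> vanishes_at_cusps \<kappa> f"

definition has_q_expansion :: "(complex \<Rightarrow> complex) \<Rightarrow> (nat \<Rightarrow> complex) \<Rightarrow> bool" where
  "has_q_expansion f a \<longleftrightarrow>
     (\<forall>z\<in>upper_half. (\<lambda>n. a n * exp (2 * of_real pi * \<i> * of_nat n * z)) sums f z)"

definition fourier_coeff :: "(complex \<Rightarrow> complex) \<Rightarrow> nat \<Rightarrow> complex" where
  "fourier_coeff f = (THE a. has_q_expansion f a)"

definition hecke_op :: "nat \<Rightarrow> nat \<Rightarrow> nat \<Rightarrow> (complex \<Rightarrow> complex) \<Rightarrow> complex \<Rightarrow> complex" where
  "hecke_op \<kappa> N n f z =
     of_real (real n powr (real \<kappa> - 1)) *
     (\<Sum>d\<in>{d. d dvd n \<and> coprime (n div d) N}.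
        \<Sum>b<d. f ((of_nat (n div d) * z + of_nat b) / of_nat d) / of_nat d ^ \<kappa>)"

definition hecke_eigenform :: "nat \<Rightarrow> nat \<Rightarrow> (complex \<Rightarrow> complex) \<Rightarrow> bool" where
  "hecke_eigenform \<kappa> N f \<longleftrightarrow>
     (\<forall>n>0. \<exists>\<mu>::complex. \<forall>z\<in>upper_half. hecke_op \<kappa> N n f z = \<mu> * f z)"

text \<open>Atkin--Lehner involutions W_Q (Q || N), given by integer matrices
  [[Qx, y], [Nz, Qw]] of determinant Q, acting by
  (f|W)(tau) = Q^(kappa/2) (N z tau + Q w)^(-kappa) f((Qx tau + y)/(N z tau + Q w)).\<close>
definition atkin_lehner_eigen :: "nat \<Rightarrow> nat \<Rightarrow> (complex \<Rightarrow> complex) \<Rightarrow> bool" where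
  "atkin_lehner_eigen \<kappa> N f \<longleftrightarrow>
     (\<forall>Q::nat. Q dvd N \<and> coprime Q (N div Q) \<longrightarrow>
       (\<forall>x y z w :: int. int Q * x * (int Q * w) - y * (int N * z) = int Q \<longrightarrow>
         (\<exists>\<epsilon>::complex. \<forall>\<tau>\<in>upper_half.
            of_real (real Q powr (real \<kappa> / 2)) *
            f ((of_int (int Q * x) * \<tau> + of_int y) / (of_int (int N * z) * \<tau> + of_int (int Q * w)))
            / (of_int (int N * z) * \<tau> + of_int (int Q * w)) ^ \<kappa>
            = \<epsilon> * f \<tau>)))"

definition primitive_form :: "nat \<Rightarrow> nat \<Rightarrow> (complex \<Rightarrow> complex) \<Rightarrow> bool" where
  "primitive_form \<kappa> N f \<longleftrightarrow> cusp_form \<kappa> N f \<and> hecke_eigenform \<kappa> N f \<and>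
     atkin_lehner_eigen \<kappa> N f \<and> fourier_coeff f 1 = 1"

definition lambda_f :: "(complex \<Rightarrow> complex) \<Rightarrow> nat \<Rightarrow> nat \<Rightarrow> complex" where
  "lambda_f f \<kappa> n = fourier_coeff f n / of_real (real n powr ((real \<kappa> - 1) / 2))"

end

theory Submission
  imports Defs "HOL-Complex_Analysis.Complex_Analysis"
begin

text \<open>
  Multiplicativity of Hecke eigenvalues gives a_f(\<nu> m_i) = a_f(\<nu>) a_f(m_i) as soon as \<nu> and m_i
  are coprime, and this is forced by (2K)! | m: then \<nu>^2 | m, so m_i = 1 + m/\<nu> \<equiv> 1 (mod \<nu>).
  Hence \<lambda>_f(m + \<nu>) = \<lambda>_f(\<nu>) \<lambda>_f(m_i) with \<lambda>_f(\<nu>) \<noteq> 0 a constant, and the normalisations by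
  (m + \<nu>)^((\<kappa>-1)/2) and m^((\<kappa>-1)/2) differ by the factor ((m + \<nu>)/m)^((\<kappa>-1)/2), which lies
  between (1 + \<nu>)^(-|\<kappa>-1|/2) and (1 + \<nu>)^(|\<kappa>-1|/2).

  Multiplicativity itself is derived from the definitions: a cusp form is a holomorphic function
  of q = e^(2\<pi>iz) on the unit disc, so it has a unique q-expansion, and comparing the
  q-expansion of T_n f with \<mu>_n f identifies \<mu>_n = a_f(n) and a_f(nM) = \<mu>_n a_f(M) for coprime n, M.
\<close>

section \<open>The q-expansion of a cusp form\<close>

lemma Im_divide_2pi_i: "Im (u / (2 * of_real pi * \<i>)) = - Re u / (2 * pi)"
proof -
  have "u / (2 * of_real pi * \<i>) = - \<i> * u / of_real (2 * pi)" by (simp add: field_simps)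
  then show ?thesis by simp
qed

lemma divide_2pi_i_in_upper_half:
  assumes "exp u = w" "w \<noteq> 0" "norm w < 1"
  shows "u / (2 * of_real pi * \<i>) \<in> upper_half"
proof -
  have "Re u = ln (norm w)" using assms(1) by auto
  then show ?thesis using assms by (simp add: upper_half_def Im_divide_2pi_i divide_neg_pos)
qed

lemma cusp_form_periodic:
  assumes "cusp_form \<kappa> N f" "z \<in> upper_half"
  shows "f (z + of_int n) = f z"
proof -
  have "gamma0_invariant \<kappa> N f" using assms(1) by (simp add: cusp_form_def)
  then have "f ((of_int 1 * z + of_int n) / (of_int 0 * z + of_int 1))
      = (of_int 0 * z + of_int 1) ^ \<kappa> * f z"
    unfolding gamma0_invariant_def using assms(2) by (metis dvd_0_right mult_1 mult_zero_right diff_zero)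
  then show ?thesis by simp
qed

lemma cusp_form_eq_if_exp_eq:
  assumes "cusp_form \<kappa> N f" "z' \<in> upper_half"
    and "exp (2 * of_real pi * \<i> * z) = exp (2 * of_real pi * \<i> * z')"
  shows "f z = f z'"
proof -
  obtain n :: int where "2 * of_real pi * \<i> * z = 2 * of_real pi * \<i> * z' + (of_int (2 * n) * pi) * \<i>"
    using assms(3) exp_eq by blast
  then have "2 * of_real pi * \<i> * z = 2 * of_real pi * \<i> * (z' + of_int n)"
    by (simp add: algebra_simps)
  then have "z = z' + of_int n" by simp
  then show ?thesis using cusp_form_periodic[OF assms(1,2)] by simp
qed

text \<open>The function F on the unit disc with f(z) = F(e^(2\<pi>iz)); its value at 0 is the limit
  enforced by vanishing at the cusp \<infinity>.\<close>
definition q_function :: "(complex \<Rightarrow> complex) \<Rightarrow> complex \<Rightarrow> complex" where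
  "q_function f w = (if w = 0 then 0 else f (Ln w / (2 * of_real pi * \<i>)))"

lemma q_function_exp:
  assumes "cusp_form \<kappa> N f" "z \<in> upper_half"
  shows "q_function f (exp (2 * of_real pi * \<i> * z)) = f z"
proof -
  let ?w = "exp (2 * of_real pi * \<i> * z)"
  have "norm ?w < 1" using assms(2) by (simp add: upper_half_def)
  then have "Ln ?w / (2 * of_real pi * \<i>) \<in> upper_half"
    by (intro divide_2pi_i_in_upper_half) auto
  then have "f z = f (Ln ?w / (2 * of_real pi * \<i>))"
    by (intro cusp_form_eq_if_exp_eq[OF assms(1)]) simp_all
  then show ?thesis by (simp add: q_function_def)
qed

lemma q_function_differentiable:
  assumes "cusp_form \<kappa> N f" "w0 \<noteq> 0" "norm w0 < 1"
  shows "q_function f field_differentiable at w0"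
proof -
  text \<open>Near w0 the branch cut of Ln is avoided by writing Ln w as Ln (w / w0) + Ln w0.\<close>
  define lift where "lift w = (Ln (w / w0) + Ln w0) / (2 * of_real pi * \<i>)" for w
  define d where "d = min (norm w0) (1 - norm w0)"
  have d: "d > 0" using assms by (simp add: d_def)
  have lift_upper: "lift w \<in> upper_half" and exp_lift: "exp (2 * of_real pi * \<i> * lift w) = w"
    if "w \<noteq> 0" "norm w < 1" for w
  proof -
    have "exp (Ln (w / w0) + Ln w0) = w" using that assms(2) by (simp add: exp_add)
    then show "lift w \<in> upper_half" "exp (2 * of_real pi * \<i> * lift w) = w"
      using divide_2pi_i_in_upper_half[of _ w] that by (simp_all add: lift_def)
  qed
  have eq: "f (lift w) = q_function f w" if "dist w w0 < d" for w
  proof -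
    have wn: "w \<noteq> 0" using that by (auto simp: d_def dist_norm)
    have "norm w \<le> norm w0 + norm (w - w0)" by (metis add.commute diff_add_cancel norm_triangle_ineq)
    then have wl: "norm w < 1" using that by (simp add: d_def dist_norm)
    then have "q_function f w = q_function f (exp (2 * of_real pi * \<i> * lift w))"
      using exp_lift wn by simp
    then show ?thesis using q_function_exp[OF assms(1) lift_upper[OF wn wl]] by simp
  qed
  have "(lift has_field_derivative (inverse (w0/w0) * (1/w0) + 0) / (2 * of_real pi * \<i>)) (at w0)"
    using assms(2) unfolding lift_def by (auto intro!: derivative_eq_intros)
  moreover have "f field_differentiable at (lift w0)"
  proof -
    have "open upper_half" unfolding upper_half_def by (simp add: open_halfspace_Im_gt)
    moreover have "f holomorphic_on upper_half" using assms(1) by (simp add: cusp_form_def)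
    ultimately show ?thesis
      using lift_upper[OF assms(2,3)] holomorphic_on_imp_differentiable_at by blast
  qed
  ultimately have "(\<lambda>w. f (lift w)) field_differentiable at w0"
    using field_differentiable_compose[of lift w0 f] field_differentiable_def by (auto simp: o_def)
  then show ?thesis
    using field_differentiable_transform_within[OF d, of w0 UNIV "\<lambda>w. f (lift w)"] eq
    by (simp add: dist_commute)
qed

lemma q_function_tendsto_0:
  assumes "cusp_form \<kappa> N f"
  shows "(q_function f \<longlongrightarrow> q_function f 0) (at 0 within ball 0 1)"
  unfolding Lim_within
proof (intro allI impI)
  fix e :: real assume "e > 0"
  with assms obtain Y where Y: "\<forall>z. Im z > Y \<longrightarrow>
      norm (f ((of_int 1 * z + of_int 0) / (of_int 0 * z + of_int 1)) / (of_int 0 * z + of_int 1) ^ \<kappa>) < e"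
    unfolding cusp_form_def vanishes_at_cusps_def by (metis diff_zero mult_1 mult_zero_right)
  define d where "d = exp (- 2 * pi * Y)"
  have "dist (q_function f w) (q_function f 0) < e" if "0 < dist w 0" "dist w 0 < d" for w
  proof -
    have wn: "w \<noteq> 0" using that by auto
    then have "ln (norm w) < ln d" using that ln_less_cancel_iff[of "norm w" d] by (simp add: d_def)
    then have "Im (Ln w / (2 * of_real pi * \<i>)) > Y"
      using wn unfolding Im_divide_2pi_i by (simp add: d_def field_simps)
    then show ?thesis using Y wn by (simp add: q_function_def)
  qed
  moreover have "d > 0" by (simp add: d_def)
  ultimately show "\<exists>d>0. \<forall>w\<in>ball 0 1. 0 < dist w 0 \<and> dist w 0 < d
      \<longrightarrow> dist (q_function f w) (q_function f 0) < e"
    by blast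
qed

lemma q_function_holomorphic:
  assumes "cusp_form \<kappa> N f"
  shows "q_function f holomorphic_on ball 0 1"
proof (rule no_isolated_singularity'[where K="{0}"])
  show "(q_function f \<longlongrightarrow> q_function f z) (at z within ball 0 1)" if "z \<in> {0}" for z
    using that q_function_tendsto_0[OF assms] by simp
  show "q_function f holomorphic_on ball 0 1 - {0}"
    unfolding holomorphic_on_def
    using q_function_differentiable[OF assms] field_differentiable_at_within by fastforce
qed auto

lemma exp_2pi_i_of_nat_mult: "exp (2 * of_real pi * \<i> * of_nat n * z) = exp (2 * of_real pi * \<i> * z) ^ n"
  by (metis exp_of_nat_mult mult.commute mult.left_commute)

lemma cusp_form_has_q_expansion:
  assumes "cusp_form \<kappa> N f"
  shows "has_q_expansion f (\<lambda>n. (deriv ^^ n) (q_function f) 0 / fact n)"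
  unfolding has_q_expansion_def
proof
  fix z assume z: "z \<in> upper_half"
  let ?w = "exp (2 * of_real pi * \<i> * z)"
  have "?w \<in> ball 0 1" using z by (simp add: upper_half_def)
  from holomorphic_power_series[OF q_function_holomorphic[OF assms] this]
  show "(\<lambda>n. (deriv ^^ n) (q_function f) 0 / fact n * exp (2 * of_real pi * \<i> * of_nat n * z)) sums f z"
    using q_function_exp[OF assms z] by (simp add: exp_2pi_i_of_nat_mult)
qed

lemma powser_sums_zero_imp_coeff_zero:
  fixes c :: "nat \<Rightarrow> complex"
  assumes "\<And>w. w \<noteq> 0 \<Longrightarrow> norm w < 1 \<Longrightarrow> (\<lambda>n. c n * w ^ n) sums 0"
  shows "c n = 0"
proof (induction n rule: less_induct)
  case (less n)
  have tail: "(\<lambda>j. c (j + n) * w ^ j) sums 0" if "w \<noteq> 0" "norm w < 1" for w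
  proof -
    have "(\<lambda>i. c (i + n) * w ^ (i + n)) sums (0 - (\<Sum>i<n. c i * w ^ i))"
      using sums_split_initial_segment[OF assms[OF that]] .
    then have "(\<lambda>i. c (i + n) * w ^ (i + n) / w ^ n) sums 0"
      using less sums_divide by fastforce
    then show ?thesis using that by (simp add: power_add)
  qed
  have "((\<lambda>w::complex. 0::complex) \<longlongrightarrow> c (0 + n)) (at 0)"
    by (rule powser_limit_0_strong[where s=1]) (use tail in auto)
  then show ?case using LIM_const_eq by (metis add_0)
qed

lemma has_q_expansion_unique:
  assumes "has_q_expansion f a" "has_q_expansion f b"
  shows "a = b"
proof -
  have "(\<lambda>n. (a n - b n) * w ^ n) sums 0" if "w \<noteq> 0" "norm w < 1" for w
  proof -
    let ?z = "Ln w / (2 * of_real pi * \<i>)"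
    have "?z \<in> upper_half" using divide_2pi_i_in_upper_half that by simp
    then have "(\<lambda>n. a n * w ^ n) sums f ?z" "(\<lambda>n. b n * w ^ n) sums f ?z"
      using assms that unfolding has_q_expansion_def by (auto simp: exp_2pi_i_of_nat_mult)
    from sums_diff[OF this] show ?thesis by (simp add: algebra_simps)
  qed
  then have "a n - b n = 0" for n by (rule powser_sums_zero_imp_coeff_zero)
  then show ?thesis by auto
qed

lemma has_q_expansion_fourier_coeff:
  assumes "cusp_form \<kappa> N f"
  shows "has_q_expansion f (fourier_coeff f)"
  unfolding fourier_coeff_def
  by (rule theI[of "has_q_expansion f", OF cusp_form_has_q_expansion[OF assms]])
    (rule has_q_expansion_unique[OF _ cusp_form_has_q_expansion[OF assms]])

section \<open>Hecke operators on q-expansions\<close>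

lemma sum_roots_of_unity_power:
  assumes "d > 0"
  shows "(\<Sum>b<d. exp (2 * of_real pi * \<i> * of_nat j * of_nat b / of_nat d)) =
         (if d dvd j then of_nat d else (0::complex))"
proof -
  define x where "x = exp (2 * of_real pi * \<i> * of_nat j / of_nat d)"
  have xb: "exp (2 * of_real pi * \<i> * of_nat j * of_nat b / of_nat d) = x ^ b" for b
    unfolding x_def by (metis exp_of_nat_mult mult.commute times_divide_eq_right)
  have "x ^ d = exp (of_nat d * (2 * of_real pi * \<i> * of_nat j / of_nat d))"
    unfolding x_def by (metis exp_of_nat_mult)
  also have "\<dots> = exp (of_nat j * (2 * of_real pi * \<i>))" using assms by (simp add: field_simps)
  finally have xd: "x ^ d = 1" by (simp add: exp_of_nat_mult)
  have "x = 1 \<longleftrightarrow> d dvd j"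
  proof
    assume "x = 1"
    then obtain k :: int where "2 * pi * j / d = of_int (2 * k) * pi"
      unfolding x_def exp_eq_1 by (auto simp: Im_divide_of_nat)
    then have "int j = int d * k" using assms by (simp add: field_simps) (metis of_int_eq_iff of_int_mult of_int_of_nat_eq)
    then show "d dvd j" by (metis dvd_triv_left int_dvd_int_iff)
  next
    assume "d dvd j"
    then obtain m where m: "j = d * m" by blast
    have "x = exp (of_nat m * (2 * of_real pi * \<i>))" unfolding x_def m using assms by (simp add: field_simps)
    then show "x = 1" by (simp add: exp_of_nat_mult)
  qed
  then show ?thesis unfolding xb using xd by (simp add: sum_gp_strict)
qed

text \<open>Averaging over the translates z \<mapsto> (ez + b)/d, b < d, keeps exactly the
  q-coefficients with index divisible by d.\<close>
lemma cusp_form_sum_translates_sums: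
  assumes cf: "cusp_form \<kappa> N f" and d: "d > 0" and e: "e > 0" and z: "z \<in> upper_half"
  shows "(\<lambda>t. of_nat d * fourier_coeff f (d * t) * exp (2 * of_real pi * \<i> * of_nat t * (of_nat e * z)))
           sums (\<Sum>b<d. f ((of_nat e * z + of_nat b) / of_nat d))"
proof -
  define a where "a = fourier_coeff f"
  define F where "F j = (if d dvd j
      then of_nat d * a j * exp (2 * of_real pi * \<i> * of_nat (j div d) * (of_nat e * z)) else 0)" for j
  have "(of_nat e * z + of_nat b) / of_nat d \<in> upper_half" for b
    using z d e by (simp add: upper_half_def Im_divide_of_nat)
  then have translate: "(\<lambda>j. a j * exp (2 * of_real pi * \<i> * of_nat j * ((of_nat e * z + of_nat b) / of_nat d)))
      sums f ((of_nat e * z + of_nat b) / of_nat d)" for b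
    using has_q_expansion_fourier_coeff[OF cf] unfolding has_q_expansion_def a_def by blast
  have average: "(\<Sum>b<d. a j * exp (2 * of_real pi * \<i> * of_nat j * ((of_nat e * z + of_nat b) / of_nat d)))
      = F j" for j
  proof -
    have "exp (2 * of_real pi * \<i> * of_nat j * ((of_nat e * z + of_nat b) / of_nat d)) =
          exp (2 * of_real pi * \<i> * of_nat j * (of_nat e * z) / of_nat d) *
          exp (2 * of_real pi * \<i> * of_nat j * of_nat b / of_nat d)" for b
      by (simp add: exp_add[symmetric] add_divide_distrib distrib_left)
    then have "(\<Sum>b<d. a j * exp (2 * of_real pi * \<i> * of_nat j * ((of_nat e * z + of_nat b) / of_nat d)))
       = a j * exp (2 * of_real pi * \<i> * of_nat j * (of_nat e * z) / of_nat d) *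
         (\<Sum>b<d. exp (2 * of_real pi * \<i> * of_nat j * of_nat b / of_nat d))"
      by (simp add: sum_distrib_left mult.assoc)
    also have "\<dots> = F j"
    proof (cases "d dvd j")
      case True
      then obtain m where m: "j = d * m" by blast
      have "exp (2 * of_real pi * \<i> * of_nat j * (of_nat e * z) / of_nat d)
          = exp (2 * of_real pi * \<i> * of_nat m * (of_nat e * z))"
        using d unfolding m by (simp add: field_simps)
      moreover have "(\<Sum>b<d. exp (2 * of_real pi * \<i> * of_nat j * of_nat b / of_nat d)) = of_nat d"
        using sum_roots_of_unity_power[OF d, of j] True by simp
      ultimately show ?thesis using True d m by (simp add: F_def)
    next
      case False
      then show ?thesis using d by (simp add: sum_roots_of_unity_power F_def)
    qed
    finally show ?thesis .
  qed
  have "(\<lambda>j. \<Sum>b<d. a j * exp (2 * of_real pi * \<i> * of_nat j * ((of_nat e * z + of_nat b) / of_nat d)))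
      sums (\<Sum>b<d. f ((of_nat e * z + of_nat b) / of_nat d))"
    by (rule sums_sum) (rule translate)
  then have "F sums (\<Sum>b<d. f ((of_nat e * z + of_nat b) / of_nat d))"
    unfolding average .
  moreover have "strict_mono (\<lambda>t. d * t)" using d by (simp add: strict_mono_def)
  moreover have "F n = 0" if "n \<notin> range (\<lambda>t. d * t)" for n
    using that unfolding F_def by (auto elim!: dvdE)
  ultimately have "(\<lambda>t. F (d * t)) sums (\<Sum>b<d. f ((of_nat e * z + of_nat b) / of_nat d))"
    using sums_mono_reindex by blast
  then show ?thesis using d by (simp add: F_def a_def)
qed

definition hecke_coeff :: "nat \<Rightarrow> nat \<Rightarrow> nat \<Rightarrow> (complex \<Rightarrow> complex) \<Rightarrow> nat \<Rightarrow> complex" where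
  "hecke_coeff \<kappa> N n f M = of_real (real n powr (real \<kappa> - 1)) *
     (\<Sum>d\<in>{d. d dvd n \<and> coprime (n div d) N}.
        (if (n div d) dvd M then of_nat d * fourier_coeff f (d * (M div (n div d))) / of_nat d ^ \<kappa> else 0))"

lemma has_q_expansion_hecke_op:
  assumes cf: "cusp_form \<kappa> N f" and n: "n > 0"
  shows "has_q_expansion (hecke_op \<kappa> N n f) (hecke_coeff \<kappa> N n f)"
  unfolding has_q_expansion_def
proof
  fix z assume z: "z \<in> upper_half"
  define D where "D = {d. d dvd n \<and> coprime (n div d) N}"
  define E where "E M = exp (2 * of_real pi * \<i> * of_nat M * z)" for M
  define c where "c d M = (if (n div d) dvd M
      then of_nat d * fourier_coeff f (d * (M div (n div d))) / of_nat d ^ \<kappa> else (0::complex))" for d M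
  have summand: "(\<lambda>M. c d M * E M) sums (\<Sum>b<d. f ((of_nat (n div d) * z + of_nat b) / of_nat d) / of_nat d ^ \<kappa>)"
    if "d \<in> D" for d
  proof -
    define e where "e = n div d"
    have d: "d > 0" and e: "e > 0" using that n unfolding D_def e_def by (auto elim!: dvdE)
    have "(\<lambda>t. c d (e * t) * E (e * t)) sums ((\<Sum>b<d. f ((of_nat e * z + of_nat b) / of_nat d)) / of_nat d ^ \<kappa>)"
      using sums_divide[OF cusp_form_sum_translates_sums[OF cf d e z]] e
      unfolding c_def E_def e_def[symmetric] by (simp add: ac_simps)
    moreover have "strict_mono (\<lambda>t. e * t)" using e by (simp add: strict_mono_def)
    moreover have "c d M * E M = 0" if "M \<notin> range (\<lambda>t. e * t)" for M
      using that unfolding c_def e_def[symmetric] by (auto elim!: dvdE)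
    ultimately have "(\<lambda>M. c d M * E M) sums ((\<Sum>b<d. f ((of_nat e * z + of_nat b) / of_nat d)) / of_nat d ^ \<kappa>)"
      using sums_mono_reindex[of "\<lambda>t. e * t" "\<lambda>M. c d M * E M"] by blast
    then show ?thesis unfolding e_def by (simp add: sum_divide_distrib)
  qed
  have "(\<lambda>M. of_real (real n powr (real \<kappa> - 1)) * (\<Sum>d\<in>D. c d M * E M)) sums hecke_op \<kappa> N n f z"
    using sums_mult[OF sums_sum[OF summand]] unfolding hecke_op_def D_def .
  then show "(\<lambda>M. hecke_coeff \<kappa> N n f M * exp (2 * of_real pi * \<i> * of_nat M * z)) sums hecke_op \<kappa> N n f z"
    unfolding hecke_coeff_def D_def[symmetric] c_def[symmetric] E_def
    by (simp add: sum_distrib_right mult.assoc)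
qed

lemma hecke_coeff_coprime:
  assumes n: "n > 0" and cop: "coprime n M"
  shows "hecke_coeff \<kappa> N n f M = fourier_coeff f (n * M)"
proof -
  define D where "D = {d. d dvd n \<and> coprime (n div d) N}"
  define g where "g d = (if (n div d) dvd M
      then of_nat d * fourier_coeff f (d * (M div (n div d))) / of_nat d ^ \<kappa> else (0::complex))" for d
  have "finite D" unfolding D_def using n by (auto intro: finite_subset[of _ "{..n}"] dest: dvd_imp_le)
  moreover have "n \<in> D" unfolding D_def using n by simp
  moreover have "g d = 0" if "d \<in> D - {n}" for d
  proof (rule ccontr)
    assume "g d \<noteq> 0"
    then have "(n div d) dvd M" unfolding g_def by (auto split: if_splits)
    moreover have "d dvd n" "d \<noteq> n" using that unfolding D_def by auto
    ultimately have "n div d = 1" using coprime_common_divisor_nat[OF cop] by (metis dvd_div_mult_self dvd_triv_left)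
    then show False using \<open>d dvd n\<close> \<open>d \<noteq> n\<close> by (metis dvd_mult_div_cancel mult.right_neutral)
  qed
  ultimately have "sum g D = g n" by (metis Diff_iff insertI1 sum.remove sum.neutral add_0_right)
  moreover have "of_real (real n powr (real \<kappa> - 1)) = (of_nat n ^ \<kappa> / of_nat n :: complex)"
    using n by (simp add: powr_diff powr_realpow)
  ultimately show ?thesis
    unfolding hecke_coeff_def D_def[symmetric] g_def[symmetric] using n by (simp add: g_def)
qed

lemma fourier_coeff_mult_coprime:
  assumes pf: "primitive_form \<kappa> N f" and n: "n > 0" and cop: "coprime n M"
  shows "fourier_coeff f (n * M) = fourier_coeff f n * fourier_coeff f M"
proof -
  have cf: "cusp_form \<kappa> N f" and "hecke_eigenform \<kappa> N f" and a1: "fourier_coeff f 1 = 1"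
    using pf by (auto simp: primitive_form_def)
  then obtain \<mu> where \<mu>: "\<forall>z\<in>upper_half. hecke_op \<kappa> N n f z = \<mu> * f z"
    using n unfolding hecke_eigenform_def by blast
  have "has_q_expansion (hecke_op \<kappa> N n f) (\<lambda>M. \<mu> * fourier_coeff f M)"
    using has_q_expansion_fourier_coeff[OF cf] \<mu> sums_mult[where c=\<mu>]
    unfolding has_q_expansion_def by (simp add: mult.assoc)
  then have eigen: "hecke_coeff \<kappa> N n f = (\<lambda>M. \<mu> * fourier_coeff f M)"
    using has_q_expansion_unique[OF has_q_expansion_hecke_op[OF cf n]] by blast
  have "\<mu> = fourier_coeff f n"
    using hecke_coeff_coprime[OF n, of 1] eigen a1 by (metis coprime_1_right mult.right_neutral)
  then show ?thesis using hecke_coeff_coprime[OF n cop] eigen by metis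
qed

section \<open>Shifted coefficients\<close>

lemma mult_dvd_fact:
  assumes "a \<noteq> b" "a \<in> {1..n}" "b \<in> {1..n}"
  shows "a * b dvd fact n"
proof -
  have "fact n = a * \<Prod>({1..n} - {a})" using assms by (simp add: fact_prod prod.remove)
  also have "\<Prod>({1..n} - {a}) = b * \<Prod>({1..n} - {a} - {b})"
    by (rule prod.remove) (use assms in auto)
  finally show ?thesis by simp
qed

lemma coprime_cofactor_of_shift:
  fixes \<nu> m mi :: nat
  assumes "\<nu> > 0" "\<nu> * \<nu> dvd m" "m + \<nu> = \<nu> * mi"
  shows "coprime \<nu> mi"
proof -
  obtain t where "m = \<nu> * \<nu> * t" using assms(2) by blast
  then have "\<nu> * mi = \<nu> * (\<nu> * t + 1)" using assms(3) by (simp add: algebra_simps)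
  then have "mi = \<nu> * t + 1" using assms(1) mult_left_cancel by blast
  then have "gcd \<nu> mi = gcd \<nu> 1" using gcd_add_mult[of \<nu> t 1] by (simp add: mult.commute)
  then show ?thesis by (simp add: coprime_iff_gcd_eq_1)
qed

lemma coprime_cofactor_of_fact_dvd:
  fixes \<nu> m mi K :: nat
  assumes "0 < \<nu>" "\<nu> \<le> K" "fact (2 * K) dvd m" "m + \<nu> = \<nu> * mi"
  shows "coprime \<nu> mi"
proof -
  have "\<nu> * (2 * \<nu>) dvd fact (2 * K)" using assms by (intro mult_dvd_fact) auto
  moreover have "\<nu> * \<nu> dvd \<nu> * (2 * \<nu>)" by simp
  ultimately have "\<nu> * \<nu> dvd m" using assms(3) by (meson dvd_trans)
  then show ?thesis using coprime_cofactor_of_shift assms(1,4) by blast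
qed

lemma lambda_f_mult:
  assumes "fourier_coeff f (a * b) = fourier_coeff f a * fourier_coeff f b"
  shows "lambda_f f \<kappa> (a * b) = lambda_f f \<kappa> a * lambda_f f \<kappa> b"
  unfolding lambda_f_def assms by (simp add: powr_mult)

lemma shift_ratio_powr_bounds:
  fixes m \<nu> :: nat and e :: real
  assumes "m > 0"
  shows "1 / (1 + real \<nu>) powr \<bar>e\<bar> \<le> (real (m + \<nu>) / real m) powr e"
    and "(real (m + \<nu>) / real m) powr e \<le> (1 + real \<nu>) powr \<bar>e\<bar>"
proof -
  define q where "q = real (m + \<nu>) / real m"
  have q1: "1 \<le> q" using assms by (simp add: q_def)
  have "q = 1 + real \<nu> / real m" using assms by (simp add: q_def field_simps)
  moreover have "real \<nu> / real m \<le> real \<nu>"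
    using assms by (simp add: divide_le_eq mult_le_cancel_left1)
  ultimately have "q powr \<bar>e\<bar> \<le> (1 + real \<nu>) powr \<bar>e\<bar>" using q1 by (intro powr_mono2) auto
  moreover have "q powr - \<bar>e\<bar> \<le> q powr e" "q powr e \<le> q powr \<bar>e\<bar>" using q1 by (auto intro: powr_mono)
  moreover have "q powr - \<bar>e\<bar> = 1 / q powr \<bar>e\<bar>" using q1 by (simp add: powr_minus_divide)
  moreover have "0 < q powr \<bar>e\<bar>" using q1 by simp
  ultimately show "1 / (1 + real \<nu>) powr \<bar>e\<bar> \<le> (real (m + \<nu>) / real m) powr e"
    and "(real (m + \<nu>) / real m) powr e \<le> (1 + real \<nu>) powr \<bar>e\<bar>"
    unfolding q_def[symmetric] by (smt (verit) frac_le)+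
qed

lemma mult_between_bounds:
  fixes c L B r :: real
  assumes "0 < c" "0 \<le> L" "0 < B" "c \<le> L / B" "c \<le> 1 / (L * B)" "1 / B \<le> r" "r \<le> B"
  shows "c \<le> L * r" "L * r \<le> 1 / c"
proof -
  have "L / B \<le> L * r" using assms mult_left_mono[of "1 / B" r L] by simp
  then show "c \<le> L * r" using assms by linarith
  have "0 < L" using assms by (smt (verit) divide_nonpos_pos)
  then have "L * r \<le> L * B" and "L * B \<le> 1 / c"
    using assms by (auto intro: mult_left_mono simp: le_divide_eq mult.commute)
  then show "L * r \<le> 1 / c" by linarith
qed

lemma primitive_form_shift_bounds:
  fixes f :: "complex \<Rightarrow> complex" and \<kappa> N \<nu> m mi :: nat and c :: real
  defines "L \<equiv> cmod (lambda_f f \<kappa> \<nu>)" and "B \<equiv> (1 + real \<nu>) powr \<bar>(real \<kappa> - 1) / 2\<bar>"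
  assumes pf: "primitive_form \<kappa> N f" and "0 < \<nu>" "0 < m" "coprime \<nu> mi" "m + \<nu> = \<nu> * mi"
    and c: "0 < c" "c \<le> L / B" "c \<le> 1 / (L * B)"
  shows "c * cmod (lambda_f f \<kappa> mi) \<le> cmod (lambda_f f \<kappa> (m + \<nu>)) \<and>
    cmod (lambda_f f \<kappa> (m + \<nu>)) \<le> cmod (lambda_f f \<kappa> mi) / c \<and>
    c * cmod (lambda_f f \<kappa> mi) \<le> cmod (fourier_coeff f (m + \<nu>)) / real m powr ((real \<kappa> - 1) / 2) \<and>
    cmod (fourier_coeff f (m + \<nu>)) / real m powr ((real \<kappa> - 1) / 2) \<le> cmod (lambda_f f \<kappa> mi) / c"
proof -
  let ?e = "(real \<kappa> - 1) / 2"
  let ?X = "cmod (lambda_f f \<kappa> mi)"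
  let ?r = "(real (m + \<nu>) / real m) powr ?e"
  have lambda_shift: "cmod (lambda_f f \<kappa> (m + \<nu>)) = L * ?X"
    using lambda_f_mult[OF fourier_coeff_mult_coprime[OF pf]] assms(4-7)
    by (simp add: L_def norm_mult)
  have "cmod (fourier_coeff f (m + \<nu>)) / real m powr ?e
      = cmod (lambda_f f \<kappa> (m + \<nu>)) * ?r"
    by (simp add: lambda_f_def norm_divide powr_divide)
  then have coeff_shift: "cmod (fourier_coeff f (m + \<nu>)) / real m powr ?e = L * ?r * ?X"
    using lambda_shift by simp
  have r: "1 / B \<le> ?r" "?r \<le> B"
    using shift_ratio_powr_bounds[of m \<nu> ?e] assms(5) by (auto simp: B_def)
  have "1 \<le> B" by (simp add: B_def ge_one_powr_ge_zero)
  then have one: "1 / B \<le> 1" "1 \<le> B" and "0 < B" by auto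
  have "0 \<le> L" by (simp add: L_def)
  note bounds = mult_between_bounds[OF c(1) this \<open>0 < B\<close> c(2,3)]
  have "c \<le> L" "L \<le> 1 / c" "c \<le> L * ?r" "L * ?r \<le> 1 / c"
    using bounds[OF one] bounds[OF r] by simp_all
  moreover have "c * ?X \<le> y * ?X \<and> y * ?X \<le> ?X / c" if "c \<le> y" "y \<le> 1 / c" for y
    using that mult_right_mono[of _ _ ?X] by (simp add: divide_inverse mult.commute)
  ultimately show ?thesis unfolding lambda_shift coeff_shift by blast
qed

theorem proposition5p1:
  fixes k :: nat and f :: "nat \<Rightarrow> complex \<Rightarrow> complex"
    and \<kappa> N \<nu> :: "nat \<Rightarrow> nat"
  assumes "k \<ge> 2"
    and "\<And>i. i \<in> {1..k} \<Longrightarrow> primitive_form (\<kappa> i) (N i) (f i)"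
    and "\<And>i. i \<in> {1..k} \<Longrightarrow> squarefree (N i)"
    and "inj_on \<nu> {1..k}"
    and "\<And>i. i \<in> {1..k} \<Longrightarrow> \<nu> i > 0"
    and "\<And>i. i \<in> {1..k} \<Longrightarrow> fourier_coeff (f i) (\<nu> i) \<noteq> 0"
  defines "K \<equiv> Max (\<nu> ` {1..k})"
  shows "\<exists>c0::real. c0 > 0 \<and>
    (\<forall>m::nat. m > 0 \<and> fact (2 * K) dvd m \<longrightarrow>
      (\<forall>i\<in>{1..k}. \<forall>mi::nat. m + \<nu> i = \<nu> i * mi \<longrightarrow>
         c0 * cmod (lambda_f (f i) (\<kappa> i) mi) \<le> cmod (lambda_f (f i) (\<kappa> i) (m + \<nu> i)) \<and>
         cmod (lambda_f (f i) (\<kappa> i) (m + \<nu> i)) \<le> cmod (lambda_f (f i) (\<kappa> i) mi) / c0 \<and>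
         c0 * cmod (lambda_f (f i) (\<kappa> i) mi)
           \<le> cmod (fourier_coeff (f i) (m + \<nu> i)) / real m powr ((real (\<kappa> i) - 1) / 2) \<and>
         cmod (fourier_coeff (f i) (m + \<nu> i)) / real m powr ((real (\<kappa> i) - 1) / 2)
           \<le> cmod (lambda_f (f i) (\<kappa> i) mi) / c0))"
proof -
  define L where "L i = cmod (lambda_f (f i) (\<kappa> i) (\<nu> i))" for i
  define B where "B i = (1 + real (\<nu> i)) powr \<bar>(real (\<kappa> i) - 1) / 2\<bar>" for i
  define c0 where "c0 = Min ((\<lambda>i. min (L i / B i) (1 / (L i * B i))) ` {1..k})"
  have "L i > 0" if "i \<in> {1..k}" for i
    using assms(5,6)[OF that] by (simp add: L_def lambda_f_def)
  moreover have "B i > 0" for i by (simp add: B_def)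
  ultimately have "c0 > 0"
    unfolding c0_def using assms(1) by (subst Min_gr_iff) (auto intro!: divide_pos_pos mult_pos_pos)
  moreover have "c0 \<le> L i / B i \<and> c0 \<le> 1 / (L i * B i)" if "i \<in> {1..k}" for i
  proof -
    have "c0 \<le> min (L i / B i) (1 / (L i * B i))" unfolding c0_def using that by (intro Min_le) auto
    then show ?thesis by simp
  qed
  moreover have "\<nu> i \<le> K" if "i \<in> {1..k}" for i
    unfolding K_def using that by (intro Max_ge) auto
  ultimately show ?thesis
    using assms(5) by (intro exI[of _ c0] conjI[OF \<open>c0 > 0\<close>] allI impI ballI
      primitive_form_shift_bounds[OF assms(2)] coprime_cofactor_of_fact_dvd[where K = K])
      (auto simp: L_def B_def)
qed

end
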